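(* Fix a countable collection of languages $\mathcal{L}$ and $\rho\in(0,1]$. Under enumerations with vanishing noise rate and arbitrary omissions, there exists a set-based generator that generates in the limit from $\mathcal{L}$ and achieves set-based lower density $\rho$ if and only if the following holds: for every non-empty finite subcollection $\mathcal{L}'\subseteq\mathcal{L}$ with $|\bigcap_{L\in\mathcal{L}'}L|=\infty$, every $L\in\mathcal{L}'$ satisfies $\mu_{\rm low}\big(\bigcap_{L''\in\mathcal{L}'}L'',\,L\big)\ge\rho$.
   Context: The universe is $U=\mathbb{N}$ with its natural order. A language is an infinite subset of $U$; a collection is a countable family of languages. For $A,B\subseteq\mathbb{N}$ with $B=\{b_1<b_2<\cdots\}$, $\mu_{\rm low}(A,B)=\liminf_n\frac1n|A\cap\{b_1,\dots,b_n\}|$. An enumeration is a sequence of distinct elements of $U$; $S_n=\{x_1,\dots,x_n\}$; the empirical noise rate is $R(L;x_{1:n})=\frac1n|\{t\le n:x_t\notin L\}|$. An enumeration of $K$ with vanishing ($o(1)$) noise rate and arbitrary omissions is a sequence in which every element of some infinite $\hat K\subseteq K$ appears exactly once and $R(\hat K;x_{1:n})\to0$. A set-based generator is a sequence of maps that, given $x_1,\dots,x_n$ (and knowledge of $\mathcal{L}$, not of $K$), outputs $A_n\subseteq U\setminus S_n$. It generates in the limit if for every $K\in\mathcal{L}$ and admissible enumeration of $K$ there is $n^\star$ with $A_n\subseteq K$ for all $n\ge n^\star$; it achieves set-based lower density $\rho$ if $\liminf_n\mu_{\rm low}(A_n,K)\ge\rho$ for every such $K$ and enumeration. *)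

theory Defs
  imports "HOL-Analysis.Analysis"
begin

text \<open>Lower density of A relative to an infinite set B = {b_1 < b_2 < ...}:
  liminf_n |A \<inter> {b_1,...,b_n}| / n. Here enumerate B is 0-indexed, so
  enumerate B ` {..<n} = {b_1,...,b_n}.\<close>
definition mu_low :: "nat set \<Rightarrow> nat set \<Rightarrow> ereal" where
  "mu_low A B = liminf (\<lambda>n. ereal (real (card (A \<inter> enumerate B ` {..<n})) / real n))"

text \<open>Empirical noise rate R(L; x_{1:n}); the enumeration is 0-indexed: x 0, ..., x (n-1).\<close>
definition noise_rate :: "nat set \<Rightarrow> (nat \<Rightarrow> nat) \<Rightarrow> nat \<Rightarrow> real" where
  "noise_rate L x n = real (card {t. t < n \<and> x t \<notin> L}) / real n"

definition admissible_enum :: "nat set \<Rightarrow> (nat \<Rightarrow> nat) \<Rightarrow> bool" where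
  "admissible_enum K x \<longleftrightarrow> inj x \<and>
     (\<exists>Kh. Kh \<subseteq> K \<and> infinite Kh \<and> Kh \<subseteq> range x \<and> (noise_rate Kh x \<longlonglongrightarrow> 0))"

text \<open>A set-based generator: maps the observed prefix [x_1,...,x_n] to A_n \<subseteq> U - S_n.\<close>
definition set_generator :: "(nat list \<Rightarrow> nat set) \<Rightarrow> bool" where
  "set_generator G \<longleftrightarrow> (\<forall>xs. G xs \<inter> set xs = {})"

definition generates_in_limit :: "nat set set \<Rightarrow> (nat list \<Rightarrow> nat set) \<Rightarrow> bool" where
  "generates_in_limit Lc G \<longleftrightarrow> (\<forall>K\<in>Lc. \<forall>x. admissible_enum K x \<longrightarrow>
      (\<exists>n0. \<forall>n\<ge>n0. G (map x [0..<n]) \<subseteq> K))"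

definition achieves_density :: "nat set set \<Rightarrow> (nat list \<Rightarrow> nat set) \<Rightarrow> real \<Rightarrow> bool" where
  "achieves_density Lc G \<rho> \<longleftrightarrow> (\<forall>K\<in>Lc. \<forall>x. admissible_enum K x \<longrightarrow>
      liminf (\<lambda>n. mu_low (G (map x [0..<n])) K) \<ge> ereal \<rho>)"

end

theory Submission
  imports Defs
begin

(* Necessity: if L' is finite and I = \<Inter>L' is infinite, the increasing enumeration of I is a
   noiseless enumeration of every member of L'. A generator must then eventually output subsets
   of every member, hence of I, so its density guarantee inside L \<in> L' is at most that of I.

   Sufficiency: enumerate the collection as f 0, f 1, ... and say that f i has low noise at time n
   if at most n/2^(i+2) of the first n observations lie outside f i. Greedily collect the indices
   i < n of low noise, skipping any index that would make the intersection finite, and output that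
   intersection minus the observations. The target f k eventually has low noise. Since the budgets
   2^-(i+2) sum to at most 1/2, indices G < k whose intersection with f k is finite cannot all have
   low noise for long: the n observations would be covered by that finite intersection, the misses
   of f k and the misses of G. Hence eventually k is collected, the output lies inside f k, and it
   is a finite intersection with f k as a member, minus a finite set, which does not change lower
   densities. *)

definition intersection_density_condition :: "nat set set \<Rightarrow> real \<Rightarrow> bool" where
  "intersection_density_condition Lc \<rho> \<longleftrightarrow>
     (\<forall>L'. L' \<subseteq> Lc \<longrightarrow> L' \<noteq> {} \<longrightarrow> finite L' \<longrightarrow> infinite (\<Inter>L') \<longrightarrow>
        (\<forall>L\<in>L'. mu_low (\<Inter>L') L \<ge> ereal \<rho>))"

lemma mu_low_mono:
  assumes "A \<subseteq> C"
  shows "mu_low A B \<le> mu_low C B"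
  unfolding mu_low_def
proof (intro Liminf_mono always_eventually allI)
  fix n
  have "card (A \<inter> enumerate B ` {..<n}) \<le> card (C \<inter> enumerate B ` {..<n})"
    by (rule card_mono) (use assms in auto)
  then show "ereal (real (card (A \<inter> enumerate B ` {..<n})) / real n)
      \<le> ereal (real (card (C \<inter> enumerate B ` {..<n})) / real n)"
    by (simp add: divide_right_mono)
qed

lemma mu_low_Diff_finite:
  assumes "finite S"
  shows "mu_low (A - S) B = mu_low A B"
proof (rule antisym)
  show "mu_low (A - S) B \<le> mu_low A B"
    by (rule mu_low_mono) auto
  define E where "E n = enumerate B ` {..<n}" for n
  have "real (card (A \<inter> E n)) \<le> real (card S) + real (card ((A - S) \<inter> E n))" for n
  proof -
    have "card (A \<inter> E n) \<le> card (S \<union> (A - S) \<inter> E n)"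
      by (rule card_mono) (auto simp: E_def assms)
    also have "\<dots> \<le> card S + card ((A - S) \<inter> E n)"
      by (rule card_Un_le)
    finally show ?thesis
      by linarith
  qed
  then have ratio_le: "ereal (real (card (A \<inter> E n)) / real n)
      \<le> ereal (real (card S) / real n) + ereal (real (card ((A - S) \<inter> E n)) / real n)" for n
    by (simp add: divide_right_mono flip: add_divide_distrib)
  have "(\<lambda>n. ereal (real (card S) / real n)) \<longlonglongrightarrow> 0"
    using lim_const_over_n[of "real (card S)"] by (simp add: zero_ereal_def)
  then have "liminf (\<lambda>n. ereal (real (card S) / real n) + ereal (real (card ((A - S) \<inter> E n)) / real n))
      = mu_low (A - S) B"
    unfolding mu_low_def E_def by (subst ereal_liminf_lim_add) auto
  moreover have "mu_low A B \<le> liminf (\<lambda>n. ereal (real (card S) / real n)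
      + ereal (real (card ((A - S) \<inter> E n)) / real n))"
    unfolding mu_low_def E_def[symmetric] by (intro Liminf_mono always_eventually allI ratio_le)
  ultimately show "mu_low A B \<le> mu_low (A - S) B"
    by simp
qed

lemma admissible_enum_enumerate:
  assumes "infinite I" "I \<subseteq> K"
  shows "admissible_enum K (enumerate I)"
  unfolding admissible_enum_def
proof (intro conjI exI)
  show "inj (enumerate I)"
    using strict_mono_enumerate[OF assms(1)] strict_mono_imp_inj_on by blast
  show "I \<subseteq> range (enumerate I)"
    using range_enumerate[OF assms(1)] by simp
  have "noise_rate I (enumerate I) = (\<lambda>n. 0)"
    using enumerate_in_set[OF assms(1)] by (auto simp: noise_rate_def)
  then show "noise_rate I (enumerate I) \<longlonglongrightarrow> 0"
    by simp
qed (use assms in auto)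

lemma density_condition_if_generator:
  assumes "generates_in_limit Lc G" and "achieves_density Lc G \<rho>"
  shows "intersection_density_condition Lc \<rho>"
  unfolding intersection_density_condition_def
proof (intro allI impI ballI)
  fix L' L
  assume L': "L' \<subseteq> Lc" "finite L'" "infinite (\<Inter>L')" and "L \<in> L'"
  define x where "x = enumerate (\<Inter>L')"
  have adm: "admissible_enum L2 x" if "L2 \<in> L'" for L2
    unfolding x_def using L'(3) that by (intro admissible_enum_enumerate) auto
  have "\<forall>L2\<in>L'. \<forall>\<^sub>F n in sequentially. G (map x [0..<n]) \<subseteq> L2"
    using assms(1) adm L'(1) unfolding generates_in_limit_def eventually_sequentially by blast
  then have "\<forall>\<^sub>F n in sequentially. \<forall>L2\<in>L'. G (map x [0..<n]) \<subseteq> L2"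
    by (rule eventually_ball_finite[OF L'(2)])
  then have "\<forall>\<^sub>F n in sequentially. mu_low (G (map x [0..<n])) L \<le> mu_low (\<Inter>L') L"
    by eventually_elim (rule mu_low_mono, blast)
  then have "liminf (\<lambda>n. mu_low (G (map x [0..<n])) L) \<le> liminf (\<lambda>_. mu_low (\<Inter>L') L)"
    by (rule Liminf_mono)
  moreover have "ereal \<rho> \<le> liminf (\<lambda>n. mu_low (G (map x [0..<n])) L)"
    using assms(2) adm \<open>L \<in> L'\<close> L'(1) unfolding achieves_density_def by blast
  ultimately show "ereal \<rho> \<le> mu_low (\<Inter>L') L"
    by (simp add: Liminf_const)
qed

definition misses :: "nat set \<Rightarrow> nat list \<Rightarrow> nat" where
  "misses L xs = length (filter (\<lambda>y. y \<notin> L) xs)"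

lemma misses_map_upt: "misses L (map x [0..<n]) = card {t. t < n \<and> x t \<notin> L}"
  unfolding misses_def length_filter_conv_card by (intro arg_cong[where f = card]) auto

lemma misses_eventually_le:
  assumes "admissible_enum K x" and "0 < \<epsilon>"
  shows "\<forall>\<^sub>F n in sequentially. real (misses K (map x [0..<n])) \<le> \<epsilon> * real n"
proof -
  obtain Kh where "Kh \<subseteq> K" and "noise_rate Kh x \<longlonglongrightarrow> 0"
    using assms(1) unfolding admissible_enum_def by blast
  then have "\<forall>\<^sub>F n in sequentially. noise_rate Kh x n < \<epsilon>"
    using assms(2) by (auto dest: order_tendstoD(2))
  then show ?thesis
  proof eventually_elim
    case (elim n)
    have "misses K (map x [0..<n]) \<le> card {t. t < n \<and> x t \<notin> Kh}"
      unfolding misses_map_upt by (rule card_mono) (use \<open>Kh \<subseteq> K\<close> in auto)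
    moreover have "real (card {t. t < n \<and> x t \<notin> Kh}) \<le> \<epsilon> * real n"
      using elim by (cases "n = 0") (auto simp: noise_rate_def field_simps)
    ultimately show ?case
      by linarith
  qed
qed

lemma card_le_card_Inter_plus_misses:
  assumes "inj x" and "finite A" and "finite (\<Inter>(f ` A))"
  shows "n \<le> card (\<Inter>(f ` A)) + (\<Sum>i\<in>A. misses (f i) (map x [0..<n]))"
proof -
  let ?M = "\<Inter>(f ` A)"
  have "{..<n} \<subseteq> {t\<in>{..<n}. x t \<in> ?M} \<union> (\<Union>i\<in>A. {t. t < n \<and> x t \<notin> f i})"
    by auto
  then have "n \<le> card ({t\<in>{..<n}. x t \<in> ?M} \<union> (\<Union>i\<in>A. {t. t < n \<and> x t \<notin> f i}))"
    using card_mono[of _ "{..<n}"] assms(2) by fastforce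
  also have "\<dots> \<le> card {t\<in>{..<n}. x t \<in> ?M} + card (\<Union>i\<in>A. {t. t < n \<and> x t \<notin> f i})"
    by (rule card_Un_le)
  also have "card {t\<in>{..<n}. x t \<in> ?M} \<le> card ?M"
    by (rule card_inj_on_le[OF inj_on_subset[OF assms(1)]]) (use assms(3) in auto)
  also have "card (\<Union>i\<in>A. {t. t < n \<and> x t \<notin> f i}) \<le> (\<Sum>i\<in>A. misses (f i) (map x [0..<n]))"
    unfolding misses_map_upt by (rule card_UN_le[OF assms(2)])
  finally show ?thesis
    by simp
qed

lemma sum_half_powers_le:
  assumes "finite G"
  shows "(\<Sum>i\<in>G. (1/2::real) ^ (i+2)) \<le> 1/2"
proof -
  obtain m where "G \<subseteq> {..<m}"
    using assms finite_nat_iff_bounded by blast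
  then have "(\<Sum>i\<in>G. (1/2::real) ^ (i+2)) \<le> (\<Sum>i<m. (1/2) ^ (i+2))"
    by (intro sum_mono2) auto
  also have "\<dots> = 1/2 - (1/2) ^ (m+1)"
    by (induction m) auto
  also have "\<dots> \<le> 1/2"
    by simp
  finally show ?thesis .
qed

definition low_noise :: "(nat \<Rightarrow> nat set) \<Rightarrow> nat list \<Rightarrow> nat \<Rightarrow> bool" where
  "low_noise f xs i \<longleftrightarrow> real (misses (f i) xs) \<le> real (length xs) * (1/2) ^ (i+2)"

lemma eventually_low_noise:
  assumes "admissible_enum (f k) x"
  shows "\<forall>\<^sub>F n in sequentially. low_noise f (map x [0..<n]) k"
  using misses_eventually_le[OF assms, of "(1/2) ^ (k+2)"]
  by (simp add: low_noise_def mult.commute)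

lemma eventually_not_all_low_noise:
  assumes "admissible_enum (f k) x" and "finite G" and "k \<notin> G"
    and "finite (\<Inter>(f ` insert k G))"
  shows "\<forall>\<^sub>F n in sequentially. \<exists>i\<in>G. \<not> low_noise f (map x [0..<n]) i"
proof -
  let ?M = "\<Inter>(f ` insert k G)"
  have "inj x"
    using assms(1) unfolding admissible_enum_def by blast
  have "\<forall>\<^sub>F n in sequentially. real (misses (f k) (map x [0..<n])) \<le> 1/4 * real n"
    using assms(1) by (rule misses_eventually_le) simp
  moreover have "\<forall>\<^sub>F n in sequentially. 4 * card ?M < n"
    by (rule eventually_gt_at_top)
  ultimately show ?thesis
  proof eventually_elim
    case (elim n)
    show ?case
    proof (rule ccontr)
      assume "\<not> (\<exists>i\<in>G. \<not> low_noise f (map x [0..<n]) i)"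
      then have "(\<Sum>i\<in>G. real (misses (f i) (map x [0..<n]))) \<le> (\<Sum>i\<in>G. real n * (1/2) ^ (i+2))"
        by (intro sum_mono) (simp add: low_noise_def)
      also have "\<dots> = real n * (\<Sum>i\<in>G. (1/2) ^ (i+2))"
        by (rule sum_distrib_left[symmetric])
      also have "\<dots> \<le> real n * (1/2)"
        by (intro mult_left_mono sum_half_powers_le assms(2)) simp
      finally have "(\<Sum>i\<in>G. real (misses (f i) (map x [0..<n]))) \<le> real n * (1/2)" .
      moreover have "n \<le> card ?M + misses (f k) (map x [0..<n]) + (\<Sum>i\<in>G. misses (f i) (map x [0..<n]))"
        using card_le_card_Inter_plus_misses[OF \<open>inj x\<close> _ assms(4), of n] assms(2,3) by simp
      then have "real n \<le> real (card ?M) + real (misses (f k) (map x [0..<n]))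
          + (\<Sum>i\<in>G. real (misses (f i) (map x [0..<n])))"
        by (simp flip: of_nat_sum of_nat_add)
      ultimately show False
        using elim by linarith
    qed
  qed
qed

fun greedy_indices :: "(nat \<Rightarrow> bool) \<Rightarrow> (nat \<Rightarrow> nat set) \<Rightarrow> nat \<Rightarrow> nat set" where
  "greedy_indices P f 0 = {}"
| "greedy_indices P f (Suc i) =
     (if P i \<and> infinite (\<Inter>(f ` insert i (greedy_indices P f i)))
      then insert i (greedy_indices P f i) else greedy_indices P f i)"

lemma greedy_indices_subset: "greedy_indices P f n \<subseteq> {i. i < n \<and> P i}"
  by (induction n) auto

lemma finite_greedy_indices: "finite (greedy_indices P f n)"
  using greedy_indices_subset by (rule finite_subset) simp

lemma greedy_indices_Inter_infinite: "infinite (\<Inter>(f ` greedy_indices P f n))"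
  by (induction n) auto

lemma greedy_indices_mono: "m \<le> n \<Longrightarrow> greedy_indices P f m \<subseteq> greedy_indices P f n"
  by (induction n) (auto simp: le_Suc_eq)

lemma greedy_indices_memI:
  assumes "k < n" and "P k" and "infinite (\<Inter>(f ` insert k (greedy_indices P f k)))"
  shows "k \<in> greedy_indices P f n"
  using assms greedy_indices_mono[of "Suc k" n P f] by auto

lemma eventually_in_greedy_indices:
  assumes "admissible_enum (f k) x"
  shows "\<forall>\<^sub>F n in sequentially. k \<in> greedy_indices (low_noise f (map x [0..<n])) f n"
proof -
  have "\<forall>G\<in>Pow {..<k}. \<forall>\<^sub>F n in sequentially.
      finite (\<Inter>(f ` insert k G)) \<longrightarrow> (\<exists>i\<in>G. \<not> low_noise f (map x [0..<n]) i)"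
  proof
    fix G
    assume "G \<in> Pow {..<k}"
    show "\<forall>\<^sub>F n in sequentially.
        finite (\<Inter>(f ` insert k G)) \<longrightarrow> (\<exists>i\<in>G. \<not> low_noise f (map x [0..<n]) i)"
    proof (cases "finite (\<Inter>(f ` insert k G))")
      case True
      then have "\<forall>\<^sub>F n in sequentially. \<exists>i\<in>G. \<not> low_noise f (map x [0..<n]) i"
        using assms \<open>G \<in> Pow {..<k}\<close>
        by (intro eventually_not_all_low_noise) (auto intro: finite_subset)
      then show ?thesis
        by (rule eventually_mono) simp
    qed simp
  qed
  then have "\<forall>\<^sub>F n in sequentially. \<forall>G\<in>Pow {..<k}.
      finite (\<Inter>(f ` insert k G)) \<longrightarrow> (\<exists>i\<in>G. \<not> low_noise f (map x [0..<n]) i)"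
    by (rule eventually_ball_finite[rotated]) simp
  moreover have "\<forall>\<^sub>F n in sequentially. low_noise f (map x [0..<n]) k"
    using assms by (rule eventually_low_noise)
  moreover have "\<forall>\<^sub>F n in sequentially. k < n"
    by (rule eventually_gt_at_top)
  ultimately show ?thesis
  proof eventually_elim
    case (elim n)
    let ?P = "low_noise f (map x [0..<n])"
    have "greedy_indices ?P f k \<in> Pow {..<k}" and "\<forall>i\<in>greedy_indices ?P f k. ?P i"
      using greedy_indices_subset[of ?P f k] by auto
    then have "infinite (\<Inter>(f ` insert k (greedy_indices ?P f k)))"
      using elim(1) by blast
    then show ?case
      using elim(2,3) by (intro greedy_indices_memI)
  qed
qed

definition greedy_generator :: "(nat \<Rightarrow> nat set) \<Rightarrow> nat list \<Rightarrow> nat set" where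
  "greedy_generator f xs = \<Inter>(f ` greedy_indices (low_noise f xs) f (length xs)) - set xs"

lemma set_generator_greedy_generator: "set_generator (greedy_generator f)"
  unfolding set_generator_def greedy_generator_def by auto

lemma greedy_generator_eventually_good:
  assumes "countable Lc" and "intersection_density_condition Lc \<rho>"
    and "K \<in> Lc" and "admissible_enum K x"
  defines "f \<equiv> from_nat_into Lc"
  shows "\<forall>\<^sub>F n in sequentially. greedy_generator f (map x [0..<n]) \<subseteq> K
      \<and> ereal \<rho> \<le> mu_low (greedy_generator f (map x [0..<n])) K"
proof -
  define k where "k = to_nat_on Lc K"
  have "f k = K"
    unfolding f_def k_def using assms(1,3) by (rule from_nat_into_to_nat_on)
  then have "\<forall>\<^sub>F n in sequentially. k \<in> greedy_indices (low_noise f (map x [0..<n])) f n"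
    using assms(4) by (intro eventually_in_greedy_indices) simp
  then show ?thesis
  proof eventually_elim
    case (elim n)
    define F where "F = greedy_indices (low_noise f (map x [0..<n])) f n"
    have "f ` F \<subseteq> Lc"
      unfolding f_def using from_nat_into assms(3) by blast
    moreover have "finite (f ` F)"
      unfolding F_def by (simp add: finite_greedy_indices)
    moreover have "infinite (\<Inter>(f ` F))"
      unfolding F_def by (rule greedy_indices_Inter_infinite)
    moreover have "K \<in> f ` F"
      using elim \<open>f k = K\<close> unfolding F_def by blast
    ultimately have "ereal \<rho> \<le> mu_low (\<Inter>(f ` F)) K"
      using assms(2) unfolding intersection_density_condition_def by blast
    moreover have "greedy_generator f (map x [0..<n]) = \<Inter>(f ` F) - set (map x [0..<n])"
      unfolding greedy_generator_def F_def by simp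
    ultimately show ?case
      using \<open>K \<in> f ` F\<close> by (auto simp: mu_low_Diff_finite)
  qed
qed

lemma generator_if_density_condition:
  assumes "countable Lc" and "intersection_density_condition Lc \<rho>"
  shows "\<exists>G. set_generator G \<and> generates_in_limit Lc G \<and> achieves_density Lc G \<rho>"
proof (intro exI conjI)
  let ?G = "greedy_generator (from_nat_into Lc)"
  note good = greedy_generator_eventually_good[OF assms]
  show "set_generator ?G"
    by (rule set_generator_greedy_generator)
  show "generates_in_limit Lc ?G"
    unfolding generates_in_limit_def
  proof (intro ballI allI impI)
    fix K x
    assume "K \<in> Lc" and "admissible_enum K x"
    from good[OF this] have "\<forall>\<^sub>F n in sequentially. ?G (map x [0..<n]) \<subseteq> K"
      by (rule eventually_mono) simp
    then show "\<exists>n0. \<forall>n\<ge>n0. ?G (map x [0..<n]) \<subseteq> K"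
      unfolding eventually_sequentially .
  qed
  show "achieves_density Lc ?G \<rho>"
    unfolding achieves_density_def
  proof (intro ballI allI impI)
    fix K x
    assume "K \<in> Lc" and "admissible_enum K x"
    from good[OF this] have "\<forall>\<^sub>F n in sequentially. ereal \<rho> \<le> mu_low (?G (map x [0..<n])) K"
      by (rule eventually_mono) simp
    then show "ereal \<rho> \<le> liminf (\<lambda>n. mu_low (?G (map x [0..<n])) K)"
      by (rule Liminf_bounded)
  qed
qed

theorem theorem6p11:
  fixes Lc :: "nat set set" and \<rho> :: real
  assumes "countable Lc"
    and "\<forall>L\<in>Lc. infinite L"
    and "0 < \<rho>" and "\<rho> \<le> 1"
  shows "(\<exists>G. set_generator G \<and> generates_in_limit Lc G \<and> achieves_density Lc G \<rho>) \<longleftrightarrow>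
         (\<forall>L'. L' \<subseteq> Lc \<longrightarrow> L' \<noteq> {} \<longrightarrow> finite L' \<longrightarrow> infinite (\<Inter>L') \<longrightarrow>
            (\<forall>L\<in>L'. mu_low (\<Inter>L') L \<ge> ereal \<rho>))"
proof -
  have "(\<exists>G. set_generator G \<and> generates_in_limit Lc G \<and> achieves_density Lc G \<rho>) \<longleftrightarrow>
      intersection_density_condition Lc \<rho>"
    using density_condition_if_generator generator_if_density_condition[OF assms(1)] by blast
  then show ?thesis
    unfolding intersection_density_condition_def .
qed

end
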